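(* Let $\chi^{(n)}=\sum_{k=1}^{k_n}\delta_{\tau_k^{(n)}}$ be a sequence of point processes on $\mathbb{R}$ such that for every $n$ the sequence $\tau_k^{(n)}$ ($1\le k\le k_n$) is decreasing, and set $\tau_k^{(n)}=-\infty$ for $k>k_n$. Let $f\in C^2(\mathbb{R})$ satisfy $f(x)>0$, $f'(x)<0$, $f''(x)>0$ for all $x\in\mathbb{R}$ and $\lim_{x\to+\infty}f'(x)=0$. Assume that for every positive integer $k$ and all $x_1,\dots,x_k\in\mathbb{R}$, $$\lim_{n\to+\infty}\mathbb{E}\sum_{i_1,\dots,i_k\text{ all distinct}}\ \prod_{j=1}^k\big(\tau_{i_j}^{(n)}-x_j\big)_+=\prod_{j=1}^kf(x_j),$$ where the sum is over pairwise distinct indices $i_1,\dots,i_k\in\{1,\dots,k_n\}$. Then for $A=(x,+\infty)$ or $A=[x,+\infty)$, $\chi^{(n)}(A)$ converges in law to a Poisson random variable with mean $-f'(x)$. Furthermore, for every positive integer $k$ and every bounded interval $I\subset\mathbb{R}$, $$\lim_{n\to+\infty}\mathbb{P}(\tau_k^{(n)}\in I)=\int_I\frac{f''(x)(-f'(x))^{k-1}}{(k-1)!}e^{f'(x)}\,dx.$$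
   Context: $y_+=\max(y,0)$. *)

theory Defs
  imports "HOL-Probability.Probability"
begin

definition count_in :: "nat \<Rightarrow> (nat \<Rightarrow> real) \<Rightarrow> real set \<Rightarrow> nat" where
  "count_in K tau A = card {k \<in> {1..K}. tau k \<in> A}"

definition factorial_moment_sum :: "nat \<Rightarrow> (nat \<Rightarrow> real) \<Rightarrow> nat \<Rightarrow> (nat \<Rightarrow> real) \<Rightarrow> real" where
  "factorial_moment_sum K tau m x =
     (\<Sum>i\<in>{i. i \<in> {1..m} \<rightarrow>\<^sub>E {1..K} \<and> inj_on i {1..m}}.
        \<Prod>j\<in>{1..m}. max (tau (i j) - x j) 0)"

end

theory Submission
  imports Defs
begin

text \<open>
  Differencing the hypothesis in the variables x_j with step h replaces each (tau - x)_+ by a ramp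
  of height h, which lies between h times the indicators of [y + h, oo) and (y, oo). Hence, for
  large n, m! E(chi(A) choose m) is squeezed between the m-th powers of the difference quotients
  (f(y) - f(y + h))/h and (f(y - h) - f(y))/h, and letting h tend to 0 gives the factorial moments
  (-f'(y))^m of a Poisson law. The Bonferroni inequalities turn convergence of factorial moments
  into convergence of point probabilities, hence of distribution functions. Since the points are
  decreasing, tau_k > a exactly when chi((a, oo)) >= k; so P(tau_k in I) converges to a difference
  of Poisson tail probabilities, which is the integral over I of their derivative.
\<close>

section \<open>Combinatorial identities and inequalities\<close>

abbreviation injections :: "nat \<Rightarrow> nat \<Rightarrow> (nat \<Rightarrow> nat) set" where
  "injections m K \<equiv> {i \<in> {1..m} \<rightarrow>\<^sub>E {1..K}. inj_on i {1..m}}"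

lemma finite_injections: "finite (injections m K)"
  by (rule finite_subset[of _ "{1..m} \<rightarrow>\<^sub>E {1..K}"]) (auto intro: finite_PiE)

lemma falling_factorial_eq_fact_binomial: "prod ((-) n) {0..<m} = fact m * (n choose m)"
proof (induction m)
  case (Suc m)
  have "(n - m) * (n choose m) = Suc m * (n choose Suc m)"
    using binomial_absorb_comp[of n m] Suc_times_binomial[of m "n - 1"] by (cases n) simp_all
  with Suc show ?case by (simp add: algebra_simps)
qed simp

lemma card_injections_into:
  "finite C \<Longrightarrow> card {i \<in> {1..m} \<rightarrow>\<^sub>E C. inj_on i {1..m::nat}} = fact m * (card C choose m)"
  using card_inj_on_subset_funcset[of "{1..m}" C "{1..m}"]
  by (simp add: falling_factorial_eq_fact_binomial)

lemma prod_of_bool_eq: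
  "finite J \<Longrightarrow> (\<Prod>j\<in>J. of_bool (P j)) = (of_bool (\<forall>j\<in>J. P j) :: 'a::comm_semiring_1)"
  by (induction J rule: finite_induct) auto

lemma sum_injections_prod_indicator:
  "(\<Sum>i\<in>injections m K. \<Prod>j\<in>{1..m}. of_bool (p (i j) \<in> A)) = fact m * real (count_in K p A choose m)"
proof -
  let ?C = "{k \<in> {1..K}. p k \<in> A}"
  have "(\<Sum>i\<in>injections m K. \<Prod>j\<in>{1..m}. of_bool (p (i j) \<in> A) :: real)
      = real (card {i \<in> injections m K. \<forall>j\<in>{1..m}. p (i j) \<in> A})"
    using finite_injections by (simp add: prod_of_bool_eq Int_def conj_commute)
  also have "{i \<in> injections m K. \<forall>j\<in>{1..m}. p (i j) \<in> A} = {i \<in> {1..m} \<rightarrow>\<^sub>E ?C. inj_on i {1..m}}"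
    by (auto simp: PiE_def Pi_def)
  also have "real (card \<dots>) = fact m * real (card ?C choose m)"
    by (subst card_injections_into) auto
  finally show ?thesis by (simp add: count_in_def)
qed

lemma factorial_moment_sum_nonneg: "factorial_moment_sum K p m x \<ge> 0"
  unfolding factorial_moment_sum_def by (intro sum_nonneg prod_nonneg) auto

lemma prod_diff_eq_sum_Pow:
  fixes a b :: "'a \<Rightarrow> 'c::comm_ring_1"
  assumes "finite J"
  shows "(\<Prod>j\<in>J. a j - b j) = (\<Sum>X\<in>Pow J. (-1)^card (J - X) * (\<Prod>j\<in>J. if j \<in> X then a j else b j))"
proof -
  have "(\<Prod>j\<in>J. a j - b j) = (\<Sum>X\<in>Pow J. (\<Prod>j\<in>X. a j) * (\<Prod>j\<in>J - X. - b j))"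
    using prod_add[OF assms, of a "\<lambda>j. - b j"] by simp
  also have "\<dots> = (\<Sum>X\<in>Pow J. (-1)^card (J - X) * (\<Prod>j\<in>J. if j \<in> X then a j else b j))"
  proof (intro sum.cong refl)
    fix X assume "X \<in> Pow J"
    then have "J \<inter> X = X" by auto
    then show "(\<Prod>j\<in>X. a j) * (\<Prod>j\<in>J - X. - b j) = (-1)^card (J - X) * (\<Prod>j\<in>J. if j \<in> X then a j else b j)"
      using assms by (simp add: prod.If_cases prod_uminus Diff_eq)
  qed
  finally show ?thesis .
qed

definition factorial_moment_diff :: "nat \<Rightarrow> (nat \<Rightarrow> real) \<Rightarrow> nat \<Rightarrow> real \<Rightarrow> real \<Rightarrow> real" where
  "factorial_moment_diff K p m a b =
     (\<Sum>i\<in>injections m K. \<Prod>j\<in>{1..m}. max (p (i j) - a) 0 - max (p (i j) - b) 0)"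

lemma factorial_moment_diff_eq:
  "factorial_moment_diff K p m a b = (\<Sum>X\<in>Pow {1..m}. (-1)^card ({1..m} - X) *
      factorial_moment_sum K p m (\<lambda>j. if j \<in> X then a else b))"
proof -
  have "factorial_moment_diff K p m a b = (\<Sum>i\<in>injections m K. \<Sum>X\<in>Pow {1..m}. (-1)^card ({1..m} - X) *
          (\<Prod>j\<in>{1..m}. max (p (i j) - (if j \<in> X then a else b)) 0))"
    unfolding factorial_moment_diff_def
    by (intro sum.cong refl, subst prod_diff_eq_sum_Pow) (auto intro!: sum.cong prod.cong)
  then show ?thesis
    by (simp add: factorial_moment_sum_def sum_distrib_left sum.swap[of _ "Pow _"])
qed

lemma factorial_moment_diff_bounds:
  assumes "a < b"
  shows "(b - a)^m * (fact m * real (count_in K p {b..} choose m)) \<le> factorial_moment_diff K p m a b"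
    and "factorial_moment_diff K p m a b \<le> (b - a)^m * (fact m * real (count_in K p {a<..} choose m))"
proof -
  have "(b - a)^m * (fact m * real (count_in K p A choose m))
      = (\<Sum>i\<in>injections m K. \<Prod>j\<in>{1..m}. (b - a) * of_bool (p (i j) \<in> A))" for A
    unfolding sum_injections_prod_indicator[symmetric] by (simp add: prod.distrib sum_distrib_left)
  moreover have "(b - a) * of_bool (q \<in> {b..}) \<le> max (q - a) 0 - max (q - b) 0"
    and "max (q - a) 0 - max (q - b) 0 \<le> (b - a) * of_bool (q \<in> {a<..})" for q
    using assms by auto
  ultimately show
      "(b - a)^m * (fact m * real (count_in K p {b..} choose m)) \<le> factorial_moment_diff K p m a b"
    and "factorial_moment_diff K p m a b \<le> (b - a)^m * (fact m * real (count_in K p {a<..} choose m))"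
    unfolding factorial_moment_diff_def using assms by (auto intro!: sum_mono prod_mono)
qed

lemma kth_in_upset_iff_le_count:
  fixes p :: "nat \<Rightarrow> real"
  assumes dec: "\<And>i j. 1 \<le> i \<Longrightarrow> i \<le> j \<Longrightarrow> j \<le> K \<Longrightarrow> p j \<le> p i"
    and up: "\<And>u v. u \<in> A \<Longrightarrow> u \<le> v \<Longrightarrow> v \<in> A" and "k \<ge> 1"
  shows "(k \<le> K \<and> p k \<in> A) \<longleftrightarrow> k \<le> count_in K p A"
proof
  assume k: "k \<le> K \<and> p k \<in> A"
  have "{1..k} \<subseteq> {i \<in> {1..K}. p i \<in> A}"
  proof
    fix i assume "i \<in> {1..k}"
    with k show "i \<in> {i \<in> {1..K}. p i \<in> A}"
      using dec[of i k] up[of "p k" "p i"] by auto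
  qed
  from card_mono[OF _ this] show "k \<le> count_in K p A"
    unfolding count_in_def by simp
next
  assume k: "k \<le> count_in K p A"
  have "count_in K p A \<le> K"
    using card_mono[of "{1..K}" "{i \<in> {1..K}. p i \<in> A}"] unfolding count_in_def by fastforce
  moreover have "p k \<in> A"
  proof (rule ccontr)
    assume "p k \<notin> A"
    have "{i \<in> {1..K}. p i \<in> A} \<subseteq> {1..<k}"
    proof
      fix i assume i: "i \<in> {i \<in> {1..K}. p i \<in> A}"
      show "i \<in> {1..<k}"
      proof (rule ccontr)
        assume "i \<notin> {1..<k}"
        with i \<open>k \<ge> 1\<close> have "p i \<le> p k" by (intro dec) auto
        with i up \<open>p k \<notin> A\<close> show False by blast
      qed
    qed
    from card_mono[OF _ this] k \<open>k \<ge> 1\<close> show False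
      unfolding count_in_def by simp
  qed
  ultimately show "k \<le> K \<and> p k \<in> A"
    using k by simp
qed

lemma binomial_mult_binomial_shift:
  "(j + i choose j) * (N choose (j + i)) = (N choose j) * (N - j choose i)"
proof (cases "j + i \<le> N")
  case True
  then show ?thesis using choose_mult[of j "j + i" N] by (simp add: mult.commute)
next
  case False
  then show ?thesis by (cases "j \<le> N") (simp_all add: binomial_eq_0)
qed

lemma alternating_binomial_partial_sum:
  "r \<ge> 1 \<Longrightarrow> (\<Sum>i\<le>L. (-1)^i * real (r choose i)) = (-1)^L * real (r - 1 choose L)"
  using gbinomial_sum_lower_neg[where a = "real r" and m = L]
  by (simp add: binomial_gbinomial of_nat_diff mult.commute)

lemma bonferroni_inequalities:
  fixes L j N :: nat
  defines "B \<equiv> (\<Sum>i\<le>L. (-1)^i * real (j + i choose j) * real (N choose (j + i)))"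
  shows "even L \<Longrightarrow> of_bool (N = j) \<le> B"
    and "odd L \<Longrightarrow> B \<le> of_bool (N = j)"
proof -
  have "B = real (N choose j) * (\<Sum>i\<le>L. (-1)^i * real (N - j choose i))"
    unfolding B_def sum_distrib_left
    by (intro sum.cong refl) (metis binomial_mult_binomial_shift mult.assoc mult.left_commute of_nat_mult)
  moreover have "(\<Sum>i\<le>L. (-1)^i * real (0 choose i)) = 1"
    by (induction L) auto
  ultimately have "B = of_bool (N = j)" if "N \<le> j"
    using that by (cases "N = j") auto
  moreover have "B = real (N choose j) * ((-1)^L * real (N - j - 1 choose L))" if "j < N"
    using that \<open>B = _\<close> by (simp add: alternating_binomial_partial_sum)
  ultimately show "even L \<Longrightarrow> of_bool (N = j) \<le> B" and "odd L \<Longrightarrow> B \<le> of_bool (N = j)"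
    by (cases "N \<le> j"; simp)+
qed

section \<open>Limits, derivatives and intervals\<close>

lemma tendsto_sandwich_family:
  fixes g :: "nat \<Rightarrow> real" and l u :: "'b \<Rightarrow> nat \<Rightarrow> real"
  assumes F: "F \<noteq> bot"
    and bounds: "eventually (\<lambda>h. eventually (\<lambda>n. l h n \<le> g n \<and> g n \<le> u h n) sequentially) F"
    and l: "eventually (\<lambda>h. l h \<longlonglongrightarrow> L h) F" "(L \<longlongrightarrow> c) F"
    and u: "eventually (\<lambda>h. u h \<longlonglongrightarrow> U h) F" "(U \<longlongrightarrow> c) F"
  shows "g \<longlonglongrightarrow> c"
proof (rule order_tendstoI)
  fix a assume "a < c"
  from bounds l(1) order_tendstoD(1)[OF l(2) \<open>a < c\<close>]
  have "eventually (\<lambda>h. eventually (\<lambda>n. l h n \<le> g n) sequentially \<and> l h \<longlonglongrightarrow> L h \<and> a < L h) F"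
    by eventually_elim (simp add: eventually_conj_iff)
  then obtain h where h: "eventually (\<lambda>n. l h n \<le> g n) sequentially" "l h \<longlonglongrightarrow> L h" "a < L h"
    using eventually_happens'[OF F] by blast
  from order_tendstoD(1)[OF h(2) h(3)] h(1) show "eventually (\<lambda>n. a < g n) sequentially"
    by eventually_elim simp
next
  fix a assume "c < a"
  from bounds u(1) order_tendstoD(2)[OF u(2) \<open>c < a\<close>]
  have "eventually (\<lambda>h. eventually (\<lambda>n. g n \<le> u h n) sequentially \<and> u h \<longlonglongrightarrow> U h \<and> U h < a) F"
    by eventually_elim (simp add: eventually_conj_iff)
  then obtain h where h: "eventually (\<lambda>n. g n \<le> u h n) sequentially" "u h \<longlonglongrightarrow> U h" "U h < a"
    using eventually_happens'[OF F] by blast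
  from order_tendstoD(2)[OF h(2) h(3)] h(1) show "eventually (\<lambda>n. g n < a) sequentially"
    by eventually_elim simp
qed

lemma bonferroni_truncation_limit:
  fixes lam :: real
  shows "(\<lambda>L. \<Sum>i\<le>L. (-1)^i * real (j + i choose j) * (lam^(j + i) / fact (j + i)))
           \<longlonglongrightarrow> lam^j / fact j * exp (- lam)"
proof -
  have "real (j + i choose j) = fact (j + i) / (fact j * fact i)" for i
    using binomial_fact[OF le_add1, where 'a = real] by simp
  then have term_eq: "(-1)^i * real (j + i choose j) * (lam^(j + i) / fact (j + i))
      = lam^j / fact j * ((- lam)^i / fact i)" for i
    by (simp add: power_add flip: power_minus)
  have "(\<lambda>L. \<Sum>i\<le>L. (- lam)^i / fact i) \<longlonglongrightarrow> exp (- lam)"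
    using exp_converges[of "- lam"] by (simp add: sums_def_le divide_inverse_commute)
  then show ?thesis
    unfolding term_eq sum_distrib_left[symmetric] by (rule tendsto_mult_left)
qed

lemma difference_quotients_tendsto_at_right:
  fixes f :: "real \<Rightarrow> real"
  assumes "(f has_real_derivative D) (at y)"
  shows "((\<lambda>h. (f y - f (y + h)) / h) \<longlongrightarrow> - D) (at_right 0)"
    and "((\<lambda>h. (f (y - h) - f y) / h) \<longlongrightarrow> - D) (at_right 0)"
proof -
  have "((\<lambda>h. (f (y + h) - f y) / h) \<longlongrightarrow> D) (at 0)"
    using assms by (simp add: DERIV_def)
  then have right: "((\<lambda>h. (f (y + h) - f y) / h) \<longlongrightarrow> D) (at_right 0)"
    and left: "((\<lambda>h. (f (y + h) - f y) / h) \<longlongrightarrow> D) (at_left 0)"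
    by (simp_all add: filterlim_at_split)
  show "((\<lambda>h. (f y - f (y + h)) / h) \<longlongrightarrow> - D) (at_right 0)"
    using tendsto_minus[OF right] by (simp add: minus_divide_left)
  show "((\<lambda>h. (f (y - h) - f y) / h) \<longlongrightarrow> - D) (at_right 0)"
    using tendsto_minus[OF left[unfolded filterlim_at_left_to_right]] by (simp add: field_simps)
qed

definition poisson_prob_less :: "real \<Rightarrow> nat \<Rightarrow> real" where
  "poisson_prob_less lam k = (\<Sum>j<k. lam ^ j / fact j * exp (- lam))"

lemma has_real_derivative_poisson_prob_less:
  assumes g: "(g has_real_derivative g') (at x)"
  shows "((\<lambda>x. poisson_prob_less (g x) (Suc k)) has_real_derivative
           - g' * g x ^ k / fact k * exp (- g x)) (at x)"
proof (induction k)
  case 0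
  show ?case unfolding poisson_prob_less_def
    by (auto intro!: derivative_eq_intros g)
next
  case (Suc k)
  have eq: "(1 + real k) * (g' * g x ^ k) / fact (Suc k) = g' * g x ^ k / fact k"
    by (simp add: fact_Suc)
  have "((\<lambda>x. g x ^ Suc k / fact (Suc k) * exp (- g x)) has_real_derivative
      (1 + real k) * (g' * g x ^ k) / fact (Suc k) * exp (- g x)
        + exp (- g x) * - g' * (g x ^ Suc k / fact (Suc k))) (at x)"
    by (rule DERIV_mult[OF DERIV_cdivide[OF DERIV_power_Suc[OF g]] DERIV_fun_exp[OF DERIV_minus[OF g]]])
  from DERIV_add[OF Suc this[unfolded eq]] show ?case
    unfolding poisson_prob_less_def sum.lessThan_Suc[of _ "Suc k"]
    by (rule DERIV_cong) (simp add: algebra_simps)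
qed

lemma integral_poisson_prob_less_derivative:
  assumes g: "\<And>x. (g has_real_derivative g' x) (at x)" and "a \<le> b"
  shows "integral {a..b} (\<lambda>x. - g' x * g x ^ k / fact k * exp (- g x))
           = poisson_prob_less (g b) (Suc k) - poisson_prob_less (g a) (Suc k)"
proof (intro integral_unique fundamental_theorem_of_calculus[OF \<open>a \<le> b\<close>])
  fix x
  show "((\<lambda>x. poisson_prob_less (g x) (Suc k)) has_vector_derivative - g' x * g x ^ k / fact k * exp (- g x))
      (at x within {a..b})"
    unfolding has_real_derivative_iff_has_vector_derivative[symmetric]
    by (rule has_field_derivative_at_within[OF has_real_derivative_poisson_prob_less[OF g]])
qed

lemma bounded_interval_eq_Diff_rays:
  fixes I :: "real set"
  assumes "is_interval I" "bounded I" "I \<noteq> {}"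
  obtains a b A B where "a \<le> b" "A \<in> {{a<..}, {a..}}" "B \<in> {{b<..}, {b..}}" "B \<subseteq> A" "I = A - B"
    "{a<..<b} \<subseteq> I" "I \<subseteq> {a..b}"
proof -
  obtain a b where "I = {} \<or> I = UNIV \<or> I = {..<b} \<or> I = {..b} \<or> I = {a<..} \<or> I = {a..} \<or>
      I = {a<..<b} \<or> I = {a<..b} \<or> I = {a..<b} \<or> I = {a..b}"
    using is_real_interval[OF \<open>is_interval I\<close>] by blast
  moreover obtain c where "\<forall>x\<in>I. \<bar>x\<bar> \<le> c"
    using \<open>bounded I\<close> bounded_real by blast
  then have "max a c + 1 \<notin> I" "min b (- c) - 1 \<notin> I"
    by fastforce+
  ultimately consider "I = {a<..<b}" | "I = {a<..b}" | "I = {a..<b}" | "I = {a..b}"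
    using \<open>I \<noteq> {}\<close> by auto
  then show ?thesis
  proof cases
    case 1
    with \<open>I \<noteq> {}\<close> show ?thesis by (intro that[of a b "{a<..}" "{b..}"]) auto
  next
    case 2
    with \<open>I \<noteq> {}\<close> show ?thesis by (intro that[of a b "{a<..}" "{b<..}"]) auto
  next
    case 3
    with \<open>I \<noteq> {}\<close> show ?thesis by (intro that[of a b "{a..}" "{b..}"]) auto
  next
    case 4
    with \<open>I \<noteq> {}\<close> show ?thesis by (intro that[of a b "{a..}" "{b<..}"]) auto
  qed
qed

section \<open>Poisson limits via factorial moments\<close>

lemma tendsto_integral_of_tendsto_nn_integral:
  fixes g :: "nat \<Rightarrow> 'a \<Rightarrow> real"
  assumes g_meas: "\<And>n. g n \<in> borel_measurable (M n)" and g_nonneg: "\<And>n \<omega>. g n \<omega> \<ge> 0"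
    and lim: "(\<lambda>n. \<integral>\<^sup>+\<omega>. ennreal (g n \<omega>) \<partial>M n) \<longlonglongrightarrow> ennreal c" and "c \<ge> 0"
  shows "eventually (\<lambda>n. integrable (M n) (g n)) sequentially"
    and "(\<lambda>n. \<integral>\<omega>. g n \<omega> \<partial>M n) \<longlonglongrightarrow> c"
proof -
  have "(\<integral>\<omega>. g n \<omega> \<partial>M n) = enn2real (\<integral>\<^sup>+\<omega>. ennreal (g n \<omega>) \<partial>M n)" for n
    using g_meas g_nonneg by (intro integral_eq_nn_integral) auto
  then show "(\<lambda>n. \<integral>\<omega>. g n \<omega> \<partial>M n) \<longlonglongrightarrow> c"
    using tendsto_enn2real[OF lim \<open>c \<ge> 0\<close>] by simp
  have "eventually (\<lambda>n. (\<integral>\<^sup>+\<omega>. ennreal (g n \<omega>) \<partial>M n) < \<infinity>) sequentially"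
    using lim by (rule order_tendstoD(2)) simp
  then show "eventually (\<lambda>n. integrable (M n) (g n)) sequentially"
    by eventually_elim (intro integrableI_nonneg g_meas, auto simp: g_nonneg)
qed

lemma (in finite_measure) measure_nat_valued_eq_sum:
  fixes N :: "'a \<Rightarrow> nat"
  assumes N_meas[measurable]: "N \<in> M \<rightarrow>\<^sub>M count_space UNIV" and "finite S"
  shows "measure M {\<omega> \<in> space M. N \<omega> \<in> S} = (\<Sum>j\<in>S. measure M {\<omega> \<in> space M. N \<omega> = j})"
proof -
  have "{\<omega> \<in> space M. N \<omega> \<in> S} = (\<Union>j\<in>S. {\<omega> \<in> space M. N \<omega> = j})"
    by auto
  also have "measure M \<dots> = (\<Sum>j\<in>S. measure M {\<omega> \<in> space M. N \<omega> = j})"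
    using \<open>finite S\<close> by (intro measure_finite_Union) (auto simp: disjoint_family_on_def)
  finally show ?thesis .
qed

lemma tendsto_integral_sum:
  fixes X :: "'i \<Rightarrow> nat \<Rightarrow> 'a \<Rightarrow> real"
  assumes "finite I"
    and int: "\<And>i. i \<in> I \<Longrightarrow> eventually (\<lambda>n. integrable (M n) (X i n)) sequentially"
    and lim: "\<And>i. i \<in> I \<Longrightarrow> (\<lambda>n. \<integral>\<omega>. X i n \<omega> \<partial>M n) \<longlonglongrightarrow> \<mu> i"
  shows "eventually (\<lambda>n. integrable (M n) (\<lambda>\<omega>. \<Sum>i\<in>I. X i n \<omega>)) sequentially"
    and "(\<lambda>n. \<integral>\<omega>. (\<Sum>i\<in>I. X i n \<omega>) \<partial>M n) \<longlonglongrightarrow> (\<Sum>i\<in>I. \<mu> i)"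
proof -
  have ev: "eventually (\<lambda>n. \<forall>i\<in>I. integrable (M n) (X i n)) sequentially"
    by (intro eventually_ball_finite \<open>finite I\<close> ballI int)
  then show "eventually (\<lambda>n. integrable (M n) (\<lambda>\<omega>. \<Sum>i\<in>I. X i n \<omega>)) sequentially"
    by eventually_elim auto
  from ev have "eventually (\<lambda>n. (\<Sum>i\<in>I. \<integral>\<omega>. X i n \<omega> \<partial>M n) = (\<integral>\<omega>. (\<Sum>i\<in>I. X i n \<omega>) \<partial>M n)) sequentially"
    by eventually_elim (simp add: integral_sum)
  with tendsto_sum[OF lim] show "(\<lambda>n. \<integral>\<omega>. (\<Sum>i\<in>I. X i n \<omega>) \<partial>M n) \<longlonglongrightarrow> (\<Sum>i\<in>I. \<mu> i)"
    by (rule Lim_transform_eventually)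
qed

lemma (in prob_space) integrated_bonferroni_inequalities:
  fixes N :: "'a \<Rightarrow> nat"
  assumes [measurable]: "N \<in> M \<rightarrow>\<^sub>M count_space UNIV"
    and int: "integrable M (\<lambda>\<omega>. \<Sum>i\<le>L. (-1)^i * real (j + i choose j) * real (N \<omega> choose (j + i)))"
  shows "even L \<Longrightarrow> prob {\<omega> \<in> space M. N \<omega> = j}
           \<le> (\<integral>\<omega>. (\<Sum>i\<le>L. (-1)^i * real (j + i choose j) * real (N \<omega> choose (j + i))) \<partial>M)"
    and "odd L \<Longrightarrow> (\<integral>\<omega>. (\<Sum>i\<le>L. (-1)^i * real (j + i choose j) * real (N \<omega> choose (j + i))) \<partial>M)
           \<le> prob {\<omega> \<in> space M. N \<omega> = j}"
proof -
  have prob_eq: "prob {\<omega> \<in> space M. N \<omega> = j} = (\<integral>\<omega>. indicator {\<omega> \<in> space M. N \<omega> = j} \<omega> \<partial>M)"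
    by (simp add: Int_absorb2)
  have ind_int: "integrable M (indicator {\<omega> \<in> space M. N \<omega> = j} :: _ \<Rightarrow> real)"
    by (intro integrable_real_indicator) (auto simp: less_top[symmetric])
  have ind: "indicator {\<omega> \<in> space M. N \<omega> = j} \<omega> = (of_bool (N \<omega> = j) :: real)" if "\<omega> \<in> space M" for \<omega>
    using that by simp
  show "prob {\<omega> \<in> space M. N \<omega> = j}
      \<le> (\<integral>\<omega>. (\<Sum>i\<le>L. (-1)^i * real (j + i choose j) * real (N \<omega> choose (j + i))) \<partial>M)" if "even L"
    unfolding prob_eq using bonferroni_inequalities(1)[OF that]
    by (intro integral_mono[OF ind_int int]) (simp add: ind)
  show "(\<integral>\<omega>. (\<Sum>i\<le>L. (-1)^i * real (j + i choose j) * real (N \<omega> choose (j + i))) \<partial>M)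
      \<le> prob {\<omega> \<in> space M. N \<omega> = j}" if "odd L"
    unfolding prob_eq using bonferroni_inequalities(2)[OF that]
    by (intro integral_mono[OF int ind_int]) (simp add: ind)
qed

lemma poisson_limit_of_binomial_moments:
  fixes M :: "nat \<Rightarrow> 'a measure" and N :: "nat \<Rightarrow> 'a \<Rightarrow> nat" and lam :: real
  assumes prob: "\<And>n. prob_space (M n)" and N_meas: "\<And>n. N n \<in> M n \<rightarrow>\<^sub>M count_space UNIV"
    and integrable: "\<And>m. eventually (\<lambda>n. integrable (M n) (\<lambda>\<omega>. real (N n \<omega> choose m))) sequentially"
    and moments: "\<And>m. (\<lambda>n. \<integral>\<omega>. real (N n \<omega> choose m) \<partial>M n) \<longlonglongrightarrow> lam ^ m / fact m"
  shows "(\<lambda>n. measure (M n) {\<omega> \<in> space (M n). N n \<omega> = j}) \<longlonglongrightarrow> lam ^ j / fact j * exp (- lam)"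
proof -
  define B where "B L n \<omega> = (\<Sum>i\<le>L. (-1)^i * real (j + i choose j) * real (N n \<omega> choose (j + i)))" for L n \<omega>
  define T where "T L = (\<Sum>i\<le>L. (-1)^i * real (j + i choose j) * (lam^(j + i) / fact (j + i)))" for L
  have B_int: "eventually (\<lambda>n. integrable (M n) (B L n)) sequentially"
    and B_lim: "(\<lambda>n. \<integral>\<omega>. B L n \<omega> \<partial>M n) \<longlonglongrightarrow> T L" for L
  proof -
    have "eventually (\<lambda>n. integrable (M n) (\<lambda>\<omega>. (-1)^i * real (j + i choose j) * real (N n \<omega> choose (j + i))))
        sequentially" for i
      using integrable[of "j + i"] by (rule eventually_mono) simp
    moreover have "(\<lambda>n. \<integral>\<omega>. (-1)^i * real (j + i choose j) * real (N n \<omega> choose (j + i)) \<partial>M n)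
        \<longlonglongrightarrow> (-1)^i * real (j + i choose j) * (lam^(j + i) / fact (j + i))" for i
      unfolding integral_mult_right_zero by (rule tendsto_mult_left[OF moments])
    ultimately show "eventually (\<lambda>n. integrable (M n) (B L n)) sequentially"
      and "(\<lambda>n. \<integral>\<omega>. B L n \<omega> \<partial>M n) \<longlonglongrightarrow> T L"
      unfolding B_def T_def by (rule tendsto_integral_sum[OF finite_atMost])+
  qed
  have bounds: "eventually (\<lambda>n. (\<integral>\<omega>. B (Suc (2 * L)) n \<omega> \<partial>M n) \<le> measure (M n) {\<omega> \<in> space (M n). N n \<omega> = j}
      \<and> measure (M n) {\<omega> \<in> space (M n). N n \<omega> = j} \<le> (\<integral>\<omega>. B (2 * L) n \<omega> \<partial>M n)) sequentially" for L
    using B_int[of "Suc (2 * L)"] B_int[of "2 * L"]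
    unfolding B_def
    by eventually_elim (intro conjI prob_space.integrated_bonferroni_inequalities[OF prob N_meas]; simp)
  have "T \<longlonglongrightarrow> lam ^ j / fact j * exp (- lam)"
    unfolding T_def by (rule bonferroni_truncation_limit)
  from LIMSEQ_subseq_LIMSEQ[OF this, of "\<lambda>L. Suc (2 * L)"] LIMSEQ_subseq_LIMSEQ[OF this, of "\<lambda>L. 2 * L"]
  have "(\<lambda>L. T (Suc (2 * L))) \<longlonglongrightarrow> lam ^ j / fact j * exp (- lam)"
    and "(\<lambda>L. T (2 * L)) \<longlonglongrightarrow> lam ^ j / fact j * exp (- lam)"
    by (simp_all add: strict_mono_def comp_def)
  with bounds B_lim show ?thesis
    by (intro tendsto_sandwich_family[where l = "\<lambda>L n. \<integral>\<omega>. B (Suc (2 * L)) n \<omega> \<partial>M n"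
          and u = "\<lambda>L n. \<integral>\<omega>. B (2 * L) n \<omega> \<partial>M n" and L = "\<lambda>L. T (Suc (2 * L))" and U = "\<lambda>L. T (2 * L)"])
      auto
qed

lemma weak_conv_of_pmf_limit:
  fixes M :: "nat \<Rightarrow> 'a measure" and N :: "nat \<Rightarrow> 'a \<Rightarrow> nat" and p :: "nat pmf"
  assumes prob: "\<And>n. prob_space (M n)" and N_meas: "\<And>n. N n \<in> M n \<rightarrow>\<^sub>M count_space UNIV"
    and lim: "\<And>j. (\<lambda>n. measure (M n) {\<omega> \<in> space (M n). N n \<omega> = j}) \<longlonglongrightarrow> pmf p j"
  shows "weak_conv_m (\<lambda>n. distr (M n) borel (\<lambda>\<omega>. real (N n \<omega>))) (distr (measure_pmf p) borel real)"
  unfolding weak_conv_m_def weak_conv_def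
proof (intro allI impI)
  fix x :: real
  define S where "S = {j :: nat. real j \<le> x}"
  have "finite S"
    unfolding S_def by (rule finite_subset[of _ "{..nat \<lceil>x\<rceil>}"]) (auto, linarith)
  have "cdf (distr (M n) borel (\<lambda>\<omega>. real (N n \<omega>))) x
      = (\<Sum>j\<in>S. measure (M n) {\<omega> \<in> space (M n). N n \<omega> = j})" for n
  proof -
    interpret prob_space "M n" by (rule prob)
    have [measurable]: "N n \<in> M n \<rightarrow>\<^sub>M count_space UNIV" by (rule N_meas)
    have "cdf (distr (M n) borel (\<lambda>\<omega>. real (N n \<omega>))) x = measure (M n) {\<omega> \<in> space (M n). N n \<omega> \<in> S}"
      by (simp add: cdf_def2 measure_distr S_def vimage_def Collect_conj_eq Int_commute)
    also have "\<dots> = (\<Sum>j\<in>S. measure (M n) {\<omega> \<in> space (M n). N n \<omega> = j})"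
      using \<open>finite S\<close> by (intro measure_nat_valued_eq_sum) auto
    finally show ?thesis .
  qed
  moreover have "cdf (distr (measure_pmf p) borel real) x = (\<Sum>j\<in>S. pmf p j)"
    using \<open>finite S\<close> by (simp add: cdf_def2 measure_distr S_def vimage_def measure_measure_pmf_finite)
  ultimately show "(\<lambda>n. cdf (distr (M n) borel (\<lambda>\<omega>. real (N n \<omega>))) x)
      \<longlonglongrightarrow> cdf (distr (measure_pmf p) borel real) x"
    by (simp add: tendsto_sum lim)
qed

section \<open>The point process\<close>

locale point_process_limit =
  fixes M :: "nat \<Rightarrow> 'a measure"
    and K :: "nat \<Rightarrow> 'a \<Rightarrow> nat"
    and tau :: "nat \<Rightarrow> nat \<Rightarrow> 'a \<Rightarrow> real"
    and f f1 f2 :: "real \<Rightarrow> real"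
  assumes prob: "\<And>n. prob_space (M n)"
    and K_meas: "\<And>n. K n \<in> measurable (M n) (count_space UNIV)"
    and tau_meas: "\<And>n k. tau n k \<in> borel_measurable (M n)"
    and decr: "\<And>n \<omega> i j. \<omega> \<in> space (M n) \<Longrightarrow> 1 \<le> i \<Longrightarrow> i \<le> j \<Longrightarrow> j \<le> K n \<omega>
                 \<Longrightarrow> tau n j \<omega> \<le> tau n i \<omega>"
    and f_deriv: "\<And>x. (f has_real_derivative f1 x) (at x)"
    and f1_deriv: "\<And>x. (f1 has_real_derivative f2 x) (at x)"
    and f_pos: "\<And>x. f x > 0"
    and f1_neg: "\<And>x. f1 x < 0"
    and moments: "\<And>m x. m \<ge> 1 \<Longrightarrow>
        ((\<lambda>n. \<integral>\<^sup>+ \<omega>. ennreal (factorial_moment_sum (K n \<omega>) (\<lambda>k. tau n k \<omega>) m x) \<partial>M n)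
          \<longlongrightarrow> ennreal (\<Prod>j\<in>{1..m}. f (x j))) sequentially"
begin

declare K_meas[measurable] tau_meas[measurable]

abbreviation moment_sum :: "nat \<Rightarrow> nat \<Rightarrow> (nat \<Rightarrow> real) \<Rightarrow> 'a \<Rightarrow> real" where
  "moment_sum n m x \<omega> \<equiv> factorial_moment_sum (K n \<omega>) (\<lambda>k. tau n k \<omega>) m x"

abbreviation moment_diff :: "nat \<Rightarrow> nat \<Rightarrow> real \<Rightarrow> real \<Rightarrow> 'a \<Rightarrow> real" where
  "moment_diff n m a b \<omega> \<equiv> factorial_moment_diff (K n \<omega>) (\<lambda>k. tau n k \<omega>) m a b"

definition chi :: "nat \<Rightarrow> real set \<Rightarrow> 'a \<Rightarrow> nat" where
  "chi n A \<omega> = count_in (K n \<omega>) (\<lambda>k. tau n k \<omega>) A"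

lemma chi_measurable[measurable]: "A \<in> sets borel \<Longrightarrow> chi n A \<in> M n \<rightarrow>\<^sub>M count_space UNIV"
  unfolding chi_def count_in_def
proof (rule measurable_card)
  fix i assume [measurable]: "A \<in> sets borel"
  have "{\<omega> \<in> space (M n). i \<in> {k \<in> {1..K n \<omega>}. tau n k \<omega> \<in> A}}
      = {\<omega> \<in> space (M n). 1 \<le> i \<and> i \<le> K n \<omega> \<and> tau n i \<omega> \<in> A}"
    by auto
  also have "\<dots> \<in> sets (M n)" by measurable
  finally show "{\<omega> \<in> space (M n). i \<in> {k \<in> {1..K n \<omega>}. tau n k \<omega> \<in> A}} \<in> sets (M n)" .
qed

lemma chi_mono: "A \<subseteq> B \<Longrightarrow> chi n A \<omega> \<le> chi n B \<omega>"
  unfolding chi_def count_in_def by (intro card_mono) auto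

lemma factorial_moment_sum_measurable[measurable]:
  "(\<lambda>\<omega>. moment_sum n m x \<omega>) \<in> borel_measurable (M n)"
proof (rule measurable_compose_countable[OF _ K_meas,
      where f = "\<lambda>k \<omega>. factorial_moment_sum k (\<lambda>k. tau n k \<omega>) m x"])
  fix k show "(\<lambda>\<omega>. factorial_moment_sum k (\<lambda>k. tau n k \<omega>) m x) \<in> borel_measurable (M n)"
    unfolding factorial_moment_sum_def by measurable
qed

lemma factorial_moment_sum_limit:
  assumes "m \<ge> 1"
  shows "eventually (\<lambda>n. integrable (M n) (\<lambda>\<omega>. moment_sum n m x \<omega>)) sequentially"
    and "(\<lambda>n. \<integral>\<omega>. moment_sum n m x \<omega> \<partial>M n) \<longlonglongrightarrow> (\<Prod>j\<in>{1..m}. f (x j))"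
  using tendsto_integral_of_tendsto_nn_integral[OF factorial_moment_sum_measurable factorial_moment_sum_nonneg
      moments[OF assms] prod_nonneg]
  by (simp_all add: f_pos less_imp_le)

lemma factorial_moment_diff_limit:
  assumes "m \<ge> 1"
  shows "eventually (\<lambda>n. integrable (M n) (\<lambda>\<omega>. moment_diff n m a b \<omega>)) sequentially"
    and "(\<lambda>n. \<integral>\<omega>. moment_diff n m a b \<omega> \<partial>M n) \<longlonglongrightarrow> (f a - f b)^m"
proof -
  define x where "x X j = (if j \<in> X then a else b)" for X :: "nat set" and j :: nat
  define c where "c X = ((-1)^card ({1..m} - X) :: real)" for X
  define F where "F X n \<omega> = c X * moment_sum n m (x X) \<omega>" for X n \<omega>
  have int: "eventually (\<lambda>n. integrable (M n) (F X n)) sequentially" for X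
    using factorial_moment_sum_limit(1)[OF assms, of "x X"] unfolding F_def by (rule eventually_mono) simp
  have lim: "(\<lambda>n. \<integral>\<omega>. F X n \<omega> \<partial>M n) \<longlonglongrightarrow> c X * (\<Prod>j\<in>{1..m}. f (x X j))" for X
    unfolding F_def integral_mult_right_zero
    by (rule tendsto_mult_left[OF factorial_moment_sum_limit(2)[OF assms]])
  have "(\<Prod>j\<in>{1..m}. f a - f b) = (\<Sum>X\<in>Pow {1..m}. c X * (\<Prod>j\<in>{1..m}. f (x X j)))"
    unfolding prod_diff_eq_sum_Pow[OF finite_atLeastAtMost] c_def x_def
    by (intro sum.cong refl arg_cong2[where f = "(*)"] prod.cong) auto
  moreover have "moment_diff n m a b \<omega> = (\<Sum>X\<in>Pow {1..m}. F X n \<omega>)" for n \<omega>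
    unfolding factorial_moment_diff_eq F_def c_def x_def ..
  ultimately show "eventually (\<lambda>n. integrable (M n) (\<lambda>\<omega>. moment_diff n m a b \<omega>)) sequentially"
    and "(\<lambda>n. \<integral>\<omega>. moment_diff n m a b \<omega> \<partial>M n) \<longlonglongrightarrow> (f a - f b)^m"
    using tendsto_integral_sum[where I = "Pow {1..m}", OF _ int lim] by simp_all
qed

lemma chi_factorial_moment_bounds:
  assumes A: "A \<in> {{y<..}, {y..}}" and "h > 0"
  shows "moment_diff n m y (y + h) \<omega> \<le> h^m * (fact m * real (chi n A \<omega> choose m))"
    and "h^m * (fact m * real (chi n A \<omega> choose m)) \<le> moment_diff n m (y - h) y \<omega>"
proof -
  have "chi n {y<..} \<omega> \<le> chi n A \<omega>" "chi n A \<omega> \<le> chi n {y..} \<omega>"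
    using A by (auto intro: chi_mono)
  then have "real (chi n {y<..} \<omega> choose m) \<le> real (chi n A \<omega> choose m)"
    and "real (chi n A \<omega> choose m) \<le> real (chi n {y..} \<omega> choose m)"
    by (simp_all add: binomial_right_mono)
  with factorial_moment_diff_bounds[of y "y + h"] factorial_moment_diff_bounds[of "y - h" y] \<open>h > 0\<close>
  show "moment_diff n m y (y + h) \<omega> \<le> h^m * (fact m * real (chi n A \<omega> choose m))"
    and "h^m * (fact m * real (chi n A \<omega> choose m)) \<le> moment_diff n m (y - h) y \<omega>"
    unfolding chi_def by (smt (verit) mult_left_mono fact_ge_zero zero_le_power)+
qed

lemma chi_binomial_moment_integrable:
  assumes A: "A \<in> {{y<..}, {y..}}"
  shows "eventually (\<lambda>n. integrable (M n) (\<lambda>\<omega>. real (chi n A \<omega> choose m))) sequentially"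
proof (cases "m = 0")
  case True
  have "integrable (M n) (\<lambda>\<omega>. 1 :: real)" for n
  proof -
    interpret prob_space "M n" by (rule prob)
    show ?thesis by simp
  qed
  with True show ?thesis by simp
next
  case False
  have [measurable]: "A \<in> sets borel" using A by auto
  from False have "m \<ge> 1" by simp
  from factorial_moment_diff_limit(1)[OF this, of "y - 1" y] show ?thesis
  proof eventually_elim
    case (elim n)
    show ?case
    proof (rule Bochner_Integration.integrable_bound[OF elim], measurable, intro AE_I2)
      fix \<omega>
      have "real (chi n A \<omega> choose m) \<le> fact m * real (chi n A \<omega> choose m)"
        by (simp add: mult_le_cancel_right1)
      with chi_factorial_moment_bounds(2)[OF A, of 1 m n \<omega>]
      show "norm (real (chi n A \<omega> choose m)) \<le> norm (moment_diff n m (y - 1) y \<omega>)"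
        by simp
    qed
  qed
qed

lemma chi_binomial_moment_sandwich:
  assumes A: "A \<in> {{y<..}, {y..}}" and "m \<ge> 1" "h > 0"
  shows "eventually (\<lambda>n.
           (\<integral>\<omega>. moment_diff n m y (y + h) \<omega> \<partial>M n) / (h^m * fact m) \<le> (\<integral>\<omega>. real (chi n A \<omega> choose m) \<partial>M n) \<and>
           (\<integral>\<omega>. real (chi n A \<omega> choose m) \<partial>M n) \<le> (\<integral>\<omega>. moment_diff n m (y - h) y \<omega> \<partial>M n) / (h^m * fact m))
         sequentially"
  using chi_binomial_moment_integrable[OF A, of m] factorial_moment_diff_limit(1)[OF \<open>m \<ge> 1\<close>, of y "y + h"]
    factorial_moment_diff_limit(1)[OF \<open>m \<ge> 1\<close>, of "y - h" y]
proof eventually_elim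
  case (elim n)
  have "(\<integral>\<omega>. moment_diff n m y (y + h) \<omega> \<partial>M n) \<le> h^m * fact m * (\<integral>\<omega>. real (chi n A \<omega> choose m) \<partial>M n)"
    using elim chi_factorial_moment_bounds(1)[OF A \<open>h > 0\<close>]
    by (subst integral_mult_right_zero[symmetric]) (intro integral_mono; simp add: mult.assoc)
  moreover have "h^m * fact m * (\<integral>\<omega>. real (chi n A \<omega> choose m) \<partial>M n) \<le> (\<integral>\<omega>. moment_diff n m (y - h) y \<omega> \<partial>M n)"
    using elim chi_factorial_moment_bounds(2)[OF A \<open>h > 0\<close>]
    by (subst integral_mult_right_zero[symmetric]) (intro integral_mono; simp add: mult.assoc)
  ultimately show ?case
    using \<open>h > 0\<close> by (simp add: pos_divide_le_eq pos_le_divide_eq mult.commute)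
qed

lemma chi_binomial_moment_limit:
  assumes A: "A \<in> {{y<..}, {y..}}"
  shows "(\<lambda>n. \<integral>\<omega>. real (chi n A \<omega> choose m) \<partial>M n) \<longlonglongrightarrow> (- f1 y)^m / fact m"
proof (cases "m = 0")
  case True
  have "(\<integral>\<omega>. 1 \<partial>M n) = (1 :: real)" for n
  proof -
    interpret prob_space "M n" by (rule prob)
    show ?thesis by (simp add: prob_space)
  qed
  with True show ?thesis by simp
next
  case False
  then have "m \<ge> 1" by simp
  define D where "D a b n = (\<integral>\<omega>. moment_diff n m a b \<omega> \<partial>M n)" for a b n
  have bounds: "eventually (\<lambda>h. eventually (\<lambda>n.
      D y (y + h) n / (h^m * fact m) \<le> (\<integral>\<omega>. real (chi n A \<omega> choose m) \<partial>M n) \<and>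
      (\<integral>\<omega>. real (chi n A \<omega> choose m) \<partial>M n) \<le> D (y - h) y n / (h^m * fact m)) sequentially) (at_right 0)"
    using eventually_at_right_less[of 0]
    by eventually_elim (use chi_binomial_moment_sandwich[OF A \<open>m \<ge> 1\<close>] in \<open>simp add: D_def\<close>)
  have "D a b \<longlonglongrightarrow> (f a - f b)^m" for a b
    unfolding D_def by (rule factorial_moment_diff_limit(2)[OF \<open>m \<ge> 1\<close>])
  then have "(\<lambda>n. D a b n / (h^m * fact m)) \<longlonglongrightarrow> ((f a - f b) / h)^m / fact m" if "h > 0" for a b h
    using that by (auto intro!: tendsto_divide simp: power_divide)
  then have lower: "eventually (\<lambda>h. (\<lambda>n. D y (y + h) n / (h^m * fact m))
        \<longlonglongrightarrow> ((f y - f (y + h)) / h)^m / fact m) (at_right 0)"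
    and upper: "eventually (\<lambda>h. (\<lambda>n. D (y - h) y n / (h^m * fact m))
        \<longlonglongrightarrow> ((f (y - h) - f y) / h)^m / fact m) (at_right 0)"
    using eventually_at_right_less[of 0] by (auto elim: eventually_mono)
  have lower_lim: "((\<lambda>h. ((f y - f (y + h)) / h)^m / fact m) \<longlongrightarrow> (- f1 y)^m / fact m) (at_right 0)"
    and upper_lim: "((\<lambda>h. ((f (y - h) - f y) / h)^m / fact m) \<longlongrightarrow> (- f1 y)^m / fact m) (at_right 0)"
    using difference_quotients_tendsto_at_right[OF f_deriv] by (auto intro!: tendsto_intros)
  show ?thesis
    by (rule tendsto_sandwich_family[OF _ bounds lower lower_lim upper upper_lim]) simp
qed

lemma chi_distribution_limit:
  assumes A: "A \<in> {{y<..}, {y..}}"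
  shows "(\<lambda>n. measure (M n) {\<omega> \<in> space (M n). chi n A \<omega> = j}) \<longlonglongrightarrow> (- f1 y)^j / fact j * exp (f1 y)"
proof -
  have "A \<in> sets borel" using A by auto
  from poisson_limit_of_binomial_moments[OF prob chi_measurable[OF this]
      chi_binomial_moment_integrable[OF A] chi_binomial_moment_limit[OF A]]
  show ?thesis by simp
qed

lemma chi_weak_conv_poisson:
  assumes A: "A \<in> {{y<..}, {y..}}"
  shows "weak_conv_m (\<lambda>n. distr (M n) borel (\<lambda>\<omega>. real (chi n A \<omega>)))
           (distr (measure_pmf (poisson_pmf (- f1 y))) borel real)"
proof (rule weak_conv_of_pmf_limit[OF prob chi_measurable])
  show "A \<in> sets borel" using A by auto
  show "(\<lambda>n. measure (M n) {\<omega> \<in> space (M n). chi n A \<omega> = j}) \<longlonglongrightarrow> pmf (poisson_pmf (- f1 y)) j" for j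
    using chi_distribution_limit[OF A] f1_neg[of y] by simp
qed

lemma kth_point_ray_limit:
  assumes "k \<ge> 1" and A: "A \<in> {{a<..}, {a..}}"
  shows "(\<lambda>n. measure (M n) {\<omega> \<in> space (M n). k \<le> K n \<omega> \<and> tau n k \<omega> \<in> A})
           \<longlonglongrightarrow> 1 - poisson_prob_less (- f1 a) k"
proof -
  have [measurable]: "A \<in> sets borel" using A by auto
  have kth_iff: "(k \<le> K n \<omega> \<and> tau n k \<omega> \<in> A) \<longleftrightarrow> k \<le> chi n A \<omega>" if "\<omega> \<in> space (M n)" for n \<omega>
    unfolding chi_def
    by (rule kth_in_upset_iff_le_count[where p = "\<lambda>k. tau n k \<omega>", OF decr[OF that] _ \<open>k \<ge> 1\<close>])
      (use A in auto)
  have "measure (M n) {\<omega> \<in> space (M n). k \<le> K n \<omega> \<and> tau n k \<omega> \<in> A}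
      = 1 - (\<Sum>j<k. measure (M n) {\<omega> \<in> space (M n). chi n A \<omega> = j})" for n
  proof -
    interpret prob_space "M n" by (rule prob)
    have "{\<omega> \<in> space (M n). k \<le> K n \<omega> \<and> tau n k \<omega> \<in> A} = {\<omega> \<in> space (M n). k \<le> chi n A \<omega>}"
      using kth_iff by blast
    also have "\<dots> = space (M n) - {\<omega> \<in> space (M n). chi n A \<omega> \<in> {..<k}}"
      by auto
    also have "measure (M n) \<dots> = 1 - measure (M n) {\<omega> \<in> space (M n). chi n A \<omega> \<in> {..<k}}"
      using measurable_sets[OF chi_measurable, of A "{..<k}" n]
      by (intro prob_compl) (simp_all add: vimage_def Int_def conj_commute)
    also have "measure (M n) {\<omega> \<in> space (M n). chi n A \<omega> \<in> {..<k}}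
        = (\<Sum>j<k. measure (M n) {\<omega> \<in> space (M n). chi n A \<omega> = j})"
      by (rule measure_nat_valued_eq_sum[OF chi_measurable]) simp_all
    finally show ?thesis .
  qed
  then show ?thesis
    unfolding poisson_prob_less_def minus_minus
    by (simp only:) (intro tendsto_diff tendsto_const tendsto_sum chi_distribution_limit[OF A])
qed

lemma kth_point_interval_limit:
  assumes "k \<ge> 1" and I: "is_interval I" "bounded I"
  shows "(\<lambda>n. measure (M n) {\<omega> \<in> space (M n). k \<le> K n \<omega> \<and> tau n k \<omega> \<in> I})
           \<longlonglongrightarrow> integral I (\<lambda>x. f2 x * (- f1 x) ^ (k - 1) / fact (k - 1) * exp (f1 x))"
proof (cases "I = {}")
  case False
  obtain a b A B where ab: "a \<le> b" and A: "A \<in> {{a<..}, {a..}}" and B: "B \<in> {{b<..}, {b..}}"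
    and "B \<subseteq> A" "I = A - B" and "{a<..<b} \<subseteq> I" "I \<subseteq> {a..b}"
    by (rule bounded_interval_eq_Diff_rays[OF I False])
  define event where "event S n = {\<omega> \<in> space (M n). k \<le> K n \<omega> \<and> tau n k \<omega> \<in> S}" for S n
  have "measure (M n) (event I n) = measure (M n) (event A n) - measure (M n) (event B n)" for n
  proof -
    interpret prob_space "M n" by (rule prob)
    have [measurable]: "A \<in> sets borel" "B \<in> sets borel" using A B by auto
    have "event I n = event A n - event B n" "event B n \<subseteq> event A n"
      using \<open>I = A - B\<close> \<open>B \<subseteq> A\<close> by (auto simp: event_def)
    moreover have "event A n \<in> sets (M n)" "event B n \<in> sets (M n)"
      unfolding event_def by measurable
    ultimately show ?thesis
      by (simp add: finite_measure_Diff)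
  qed
  moreover have "(\<lambda>n. measure (M n) (event A n) - measure (M n) (event B n))
      \<longlonglongrightarrow> (1 - poisson_prob_less (- f1 a) k) - (1 - poisson_prob_less (- f1 b) k)"
    unfolding event_def by (intro tendsto_diff kth_point_ray_limit \<open>k \<ge> 1\<close> A B)
  ultimately have "(\<lambda>n. measure (M n) (event I n))
      \<longlonglongrightarrow> poisson_prob_less (- f1 b) k - poisson_prob_less (- f1 a) k"
    by simp
  moreover have "{a..b} - I \<subseteq> {a, b}"
    using \<open>{a<..<b} \<subseteq> I\<close> by force
  then have "integral I (\<lambda>x. f2 x * (- f1 x) ^ (k - 1) / fact (k - 1) * exp (f1 x))
      = integral {a..b} (\<lambda>x. f2 x * (- f1 x) ^ (k - 1) / fact (k - 1) * exp (f1 x))"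
    by (intro integral_subset_negligible[OF \<open>I \<subseteq> {a..b}\<close>] negligible_subset[OF negligible_finite]) auto
  moreover have "\<dots> = poisson_prob_less (- f1 b) k - poisson_prob_less (- f1 a) k"
    using integral_poisson_prob_less_derivative[OF DERIV_minus[OF f1_deriv] ab, of "k - 1"] \<open>k \<ge> 1\<close>
    by simp
  ultimately show ?thesis
    by (simp add: event_def)
qed simp

end

theorem lemma2:
  fixes M :: "nat \<Rightarrow> 'a measure"
    and K :: "nat \<Rightarrow> 'a \<Rightarrow> nat"
    and tau :: "nat \<Rightarrow> nat \<Rightarrow> 'a \<Rightarrow> real"
    and f f1 f2 :: "real \<Rightarrow> real"
  assumes prob: "\<And>n. prob_space (M n)"
    and K_meas: "\<And>n. K n \<in> measurable (M n) (count_space UNIV)"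
    and tau_meas: "\<And>n k. tau n k \<in> borel_measurable (M n)"
    and decr: "\<And>n \<omega> i j. \<omega> \<in> space (M n) \<Longrightarrow> 1 \<le> i \<Longrightarrow> i \<le> j \<Longrightarrow> j \<le> K n \<omega>
                 \<Longrightarrow> tau n j \<omega> \<le> tau n i \<omega>"
    and f_deriv: "\<And>x. (f has_real_derivative f1 x) (at x)"
    and f1_deriv: "\<And>x. (f1 has_real_derivative f2 x) (at x)"
    and f2_cont: "continuous_on UNIV f2"
    and f_pos: "\<And>x. f x > 0"
    and f1_neg: "\<And>x. f1 x < 0"
    and f2_pos: "\<And>x. f2 x > 0"
    and f1_lim: "(f1 \<longlongrightarrow> 0) at_top"
    and moments: "\<And>m x. m \<ge> 1 \<Longrightarrow>
        ((\<lambda>n. \<integral>\<^sup>+ \<omega>. ennreal (factorial_moment_sum (K n \<omega>) (\<lambda>k. tau n k \<omega>) m x) \<partial>M n)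
          \<longlongrightarrow> ennreal (\<Prod>j\<in>{1..m}. f (x j))) sequentially"
  shows "(\<forall>x. \<forall>A \<in> {{x<..}, {x..}}.
            weak_conv_m (\<lambda>n. distr (M n) borel (\<lambda>\<omega>. real (count_in (K n \<omega>) (\<lambda>k. tau n k \<omega>) A)))
                        (distr (measure_pmf (poisson_pmf (- f1 x))) borel real))
       \<and> (\<forall>k I. k \<ge> 1 \<longrightarrow> is_interval I \<longrightarrow> bounded I \<longrightarrow>
            ((\<lambda>n. measure (M n) {\<omega> \<in> space (M n). k \<le> K n \<omega> \<and> tau n k \<omega> \<in> I})
              \<longlongrightarrow> integral I (\<lambda>x. f2 x * (- f1 x) ^ (k - 1) / fact (k - 1) * exp (f1 x)))
              sequentially)"
proof -
  interpret point_process_limit M K tau f f1 f2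
    by (rule point_process_limit.intro)
      (fact prob K_meas tau_meas decr f_deriv f1_deriv f_pos f1_neg moments)+
  show ?thesis
    using chi_weak_conv_poisson kth_point_interval_limit unfolding chi_def by blast
qed

end
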